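(* Let $f:M^n\to\mathbb{R}^{n+p}$, $n\ge3$, be an umbilic-free isometric immersion with flat normal bundle and semi-parallel Moebius second fundamental form, with distinct Moebius principal normal vector fields $\bar\eta_1,\dots,\bar\eta_k$ and Blaschke eigenvalues $\theta_1,\dots,\theta_k$. If $\|\bar\eta_k\|^2+2\theta_k=0$ on an open set $U$, then on $U$ one has $\langle\bar\eta_i-\bar\eta_k,\bar\eta_j-\bar\eta_k\rangle=0$ for all $1\le i\ne j\le k-1$, and consequently $k\le p+1$.
   Context: Let $f:M^n\to\mathbb{R}^{m}$ be an isometric immersion of $(M^n,\langle\cdot,\cdot\rangle)$ with second fundamental form $\alpha$, mean curvature vector $\mathcal H=\frac1n\operatorname{tr}\alpha$ and normal connection $\nabla^\perp$ with curvature $R^\perp$. Put $\rho^2=\frac{n}{n-1}(\|\alpha\|^2-n\|\mathcal H\|^2)$; $f$ is umbilic-free if $\rho>0$. The Moebius metric is $\langle\cdot,\cdot\rangle^*=\rho^2\langle\cdot,\cdot\rangle$ with curvature $R^*$; the Moebius second fundamental form is $\beta=\rho(\alpha-\mathcal H\langle\cdot,\cdot\rangle)$; the Blaschke tensor is $\psi(X,Y)=\frac1\rho\langle\beta(X,Y),\mathcal H\rangle+\frac{1}{2\rho^2}(\|\operatorname{grad}^*\rho\|_*^2+\|\mathcal H\|^2)\langle X,Y\rangle^*-\frac1\rho\operatorname{Hess}^*\rho(X,Y)$ (with respect to $\langle\cdot,\cdot\rangle^*$). $f$ has semi-parallel Moebius second fundamental form if $R^\perp(X,Y)\beta(Z,W)-\beta(R^*(X,Y)Z,W)-\beta(Z,R^*(X,Y)W)=0$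 for all tangent $X,Y,Z,W$. $f$ has flat normal bundle if $R^\perp=0$; then there are pairwise distinct normal fields $\eta_1,\dots,\eta_k$ and an orthogonal decomposition $TM=\bigoplus E_{\eta_i}$ with $\alpha(X,Y)=\langle X,Y\rangle\eta_i$ for $X\in E_{\eta_i}$. The Moebius principal normal vector fields are $\bar\eta_i=\rho^{-1}(\eta_i-\mathcal H)$, so $\beta(X,Y)=\langle X,Y\rangle^*\bar\eta_i$ for $X\in E_{\eta_i}$. Standing fact: under these hypotheses $\psi(E_{\eta_i},E_{\eta_j})=0$ for $i\ne j$ and $\psi|_{E_{\eta_i}}=\theta_i\langle\cdot,\cdot\rangle^*$ for smooth functions $\theta_i$ (the Blaschke eigenvalues), and $\langle\bar\eta_i,\bar\eta_j\rangle+\theta_i+\theta_j=0$ for $i\ne j$. *)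

theory Defs
  imports "HOL-Analysis.Analysis"
begin

text \<open>Local (coordinate-chart) differential geometry of an immersion
  f : M (open subset of R^n, coordinates indexed by the finite type 'n) \<rightarrow> R^(n+p).
  Tangent vectors at x are represented by coefficient vectors a :: real^'n,
  i.e. X = sum_i a_i d_i f (x).\<close>

definition pd :: "'n::finite \<Rightarrow> (real^'n \<Rightarrow> 'b::real_normed_vector) \<Rightarrow> real^'n \<Rightarrow> 'b" where
  "pd i F x = vector_derivative (\<lambda>t. F (x + t *\<^sub>R axis i 1)) (at 0)"

fun iterpd :: "'n::finite list \<Rightarrow> (real^'n \<Rightarrow> 'b::real_normed_vector) \<Rightarrow> real^'n \<Rightarrow> 'b" where
  "iterpd [] F = F"
| "iterpd (i # is) F = pd i (iterpd is F)"

definition C_inf_on :: "(real^'n::finite) set \<Rightarrow> (real^'n \<Rightarrow> 'b::real_normed_vector) \<Rightarrow> bool" where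
  "C_inf_on S F \<longleftrightarrow> (\<forall>is. \<forall>x\<in>S. iterpd is F differentiable (at x))"

definition frame :: "(real^'n::finite \<Rightarrow> real^'m::finite) \<Rightarrow> real^'n \<Rightarrow> 'n \<Rightarrow> real^'m" where
  "frame f x i = pd i f x"

definition gmat :: "(real^'n::finite \<Rightarrow> real^'m::finite) \<Rightarrow> real^'n \<Rightarrow> real^'n^'n" where
  "gmat f x = (\<chi> i j. frame f x i \<bullet> frame f x j)"

definition ginv :: "(real^'n::finite \<Rightarrow> real^'m::finite) \<Rightarrow> real^'n \<Rightarrow> real^'n^'n" where
  "ginv f x = matrix_inv (gmat f x)"

definition tvec :: "(real^'n::finite \<Rightarrow> real^'m::finite) \<Rightarrow> real^'n \<Rightarrow> real^'n \<Rightarrow> real^'m" where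
  "tvec f x a = (\<Sum>i\<in>UNIV. a $ i *\<^sub>R frame f x i)"

definition gmet :: "(real^'n::finite \<Rightarrow> real^'m::finite) \<Rightarrow> real^'n \<Rightarrow> real^'n \<Rightarrow> real^'n \<Rightarrow> real" where
  "gmet f x a b = tvec f x a \<bullet> tvec f x b"

text \<open>Smooth immersion on the (open) coordinate domain S (the induced metric is then
  the pulled back Euclidean one, i.e. f is an isometric immersion of (S, gmet f)).\<close>
definition isometric_immersion_on :: "(real^'n::finite) set \<Rightarrow> (real^'n \<Rightarrow> real^'m::finite) \<Rightarrow> bool" where
  "isometric_immersion_on S f \<longleftrightarrow> C_inf_on S f \<and> (\<forall>x\<in>S. invertible (gmat f x))"

definition nproj :: "(real^'n::finite \<Rightarrow> real^'m::finite) \<Rightarrow> real^'n \<Rightarrow> real^'m \<Rightarrow> real^'m" where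
  "nproj f x v = v - (\<Sum>i\<in>UNIV. (\<Sum>j\<in>UNIV. ginv f x $ i $ j * (v \<bullet> frame f x j)) *\<^sub>R frame f x i)"

definition sff :: "(real^'n::finite \<Rightarrow> real^'m::finite) \<Rightarrow> real^'n \<Rightarrow> 'n \<Rightarrow> 'n \<Rightarrow> real^'m" where
  "sff f x i j = nproj f x (pd i (pd j f) x)"

definition alpha :: "(real^'n::finite \<Rightarrow> real^'m::finite) \<Rightarrow> real^'n \<Rightarrow> real^'n \<Rightarrow> real^'n \<Rightarrow> real^'m" where
  "alpha f x a b = (\<Sum>i\<in>UNIV. \<Sum>j\<in>UNIV. (a $ i * b $ j) *\<^sub>R sff f x i j)"

definition mcv :: "(real^'n::finite \<Rightarrow> real^'m::finite) \<Rightarrow> real^'n \<Rightarrow> real^'m" where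
  "mcv f x = (1 / real CARD('n)) *\<^sub>R (\<Sum>i\<in>UNIV. \<Sum>j\<in>UNIV. ginv f x $ i $ j *\<^sub>R sff f x i j)"

definition sff_sqnorm :: "(real^'n::finite \<Rightarrow> real^'m::finite) \<Rightarrow> real^'n \<Rightarrow> real" where
  "sff_sqnorm f x = (\<Sum>i\<in>UNIV. \<Sum>j\<in>UNIV. \<Sum>k\<in>UNIV. \<Sum>l\<in>UNIV.
      ginv f x $ i $ k * ginv f x $ j $ l * (sff f x i j \<bullet> sff f x k l))"

definition rho :: "(real^'n::finite \<Rightarrow> real^'m::finite) \<Rightarrow> real^'n \<Rightarrow> real" where
  "rho f x = sqrt (real CARD('n) / (real CARD('n) - 1)
      * (sff_sqnorm f x - real CARD('n) * (norm (mcv f x))\<^sup>2))"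

definition umbilic_free_on :: "(real^'n::finite) set \<Rightarrow> (real^'n \<Rightarrow> real^'m::finite) \<Rightarrow> bool" where
  "umbilic_free_on S f \<longleftrightarrow> (\<forall>x\<in>S. rho f x > 0)"

definition gs :: "(real^'n::finite \<Rightarrow> real^'m::finite) \<Rightarrow> real^'n \<Rightarrow> real^'n^'n" where
  "gs f x = (\<chi> i j. (rho f x)\<^sup>2 * gmat f x $ i $ j)"

definition gsinv :: "(real^'n::finite \<Rightarrow> real^'m::finite) \<Rightarrow> real^'n \<Rightarrow> real^'n^'n" where
  "gsinv f x = matrix_inv (gs f x)"

definition gsmet :: "(real^'n::finite \<Rightarrow> real^'m::finite) \<Rightarrow> real^'n \<Rightarrow> real^'n \<Rightarrow> real^'n \<Rightarrow> real" where
  "gsmet f x a b = (rho f x)\<^sup>2 * gmet f x a b"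

definition chr :: "(real^'n::finite \<Rightarrow> real^'m::finite) \<Rightarrow> real^'n \<Rightarrow> 'n \<Rightarrow> 'n \<Rightarrow> 'n \<Rightarrow> real" where
  "chr f x k i j = 1/2 * (\<Sum>l\<in>UNIV. gsinv f x $ k $ l *
      (pd i (\<lambda>y. gs f y $ j $ l) x + pd j (\<lambda>y. gs f y $ i $ l) x - pd l (\<lambda>y. gs f y $ i $ j) x))"

text \<open>Curvature of the Moebius metric: R*(d_i,d_j)d_k = sum_l Rs i j k l d_l,
  with R(X,Y) = nabla_X nabla_Y - nabla_Y nabla_X - nabla_[X,Y].\<close>
definition Rs :: "(real^'n::finite \<Rightarrow> real^'m::finite) \<Rightarrow> real^'n \<Rightarrow> 'n \<Rightarrow> 'n \<Rightarrow> 'n \<Rightarrow> 'n \<Rightarrow> real" where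
  "Rs f x i j k l = pd i (\<lambda>y. chr f y l j k) x - pd j (\<lambda>y. chr f y l i k) x
      + (\<Sum>m\<in>UNIV. chr f x m j k * chr f x l i m - chr f x m i k * chr f x l j m)"

definition Rsvec :: "(real^'n::finite \<Rightarrow> real^'m::finite) \<Rightarrow> real^'n \<Rightarrow> real^'n \<Rightarrow> real^'n \<Rightarrow> real^'n \<Rightarrow> real^'n" where
  "Rsvec f x a b c = (\<chi> l. \<Sum>i\<in>UNIV. \<Sum>j\<in>UNIV. \<Sum>k\<in>UNIV. a $ i * b $ j * c $ k * Rs f x i j k l)"

definition beta :: "(real^'n::finite \<Rightarrow> real^'m::finite) \<Rightarrow> real^'n \<Rightarrow> real^'n \<Rightarrow> real^'n \<Rightarrow> real^'m" where
  "beta f x a b = rho f x *\<^sub>R (alpha f x a b - gmet f x a b *\<^sub>R mcv f x)"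

definition nconn :: "(real^'n::finite \<Rightarrow> real^'m::finite) \<Rightarrow> 'n \<Rightarrow> (real^'n \<Rightarrow> real^'m) \<Rightarrow> real^'n \<Rightarrow> real^'m" where
  "nconn f i xi = (\<lambda>y. nproj f y (pd i xi y))"

definition Rperp :: "(real^'n::finite \<Rightarrow> real^'m::finite) \<Rightarrow> real^'n \<Rightarrow> real^'n \<Rightarrow> real^'n \<Rightarrow> (real^'n \<Rightarrow> real^'m) \<Rightarrow> real^'m" where
  "Rperp f x a b xi = (\<Sum>i\<in>UNIV. \<Sum>j\<in>UNIV. (a $ i * b $ j) *\<^sub>R
      (nconn f i (nconn f j xi) x - nconn f j (nconn f i xi) x))"

definition flat_normal_bundle_on :: "(real^'n::finite) set \<Rightarrow> (real^'n \<Rightarrow> real^'m::finite) \<Rightarrow> bool" where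
  "flat_normal_bundle_on S f \<longleftrightarrow>
     (\<forall>xi. C_inf_on S xi \<and> (\<forall>y\<in>S. nproj f y (xi y) = xi y) \<longrightarrow>
        (\<forall>x\<in>S. \<forall>a b. Rperp f x a b xi = 0))"

definition semi_parallel_on :: "(real^'n::finite) set \<Rightarrow> (real^'n \<Rightarrow> real^'m::finite) \<Rightarrow> bool" where
  "semi_parallel_on S f \<longleftrightarrow>
     (\<forall>x\<in>S. \<forall>a b c d. Rperp f x a b (\<lambda>y. beta f y c d)
        - beta f x (Rsvec f x a b c) d - beta f x c (Rsvec f x a b d) = 0)"

definition gradsq :: "(real^'n::finite \<Rightarrow> real^'m::finite) \<Rightarrow> real^'n \<Rightarrow> real" where
  "gradsq f x = (\<Sum>i\<in>UNIV. \<Sum>j\<in>UNIV. gsinv f x $ i $ j * pd i (rho f) x * pd j (rho f) x)"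

definition hess :: "(real^'n::finite \<Rightarrow> real^'m::finite) \<Rightarrow> real^'n \<Rightarrow> 'n \<Rightarrow> 'n \<Rightarrow> real" where
  "hess f x i j = pd i (pd j (rho f)) x - (\<Sum>k\<in>UNIV. chr f x k i j * pd k (rho f) x)"

definition psi_coef :: "(real^'n::finite \<Rightarrow> real^'m::finite) \<Rightarrow> real^'n \<Rightarrow> 'n \<Rightarrow> 'n \<Rightarrow> real" where
  "psi_coef f x i j = (1 / rho f x) * (beta f x (axis i 1) (axis j 1) \<bullet> mcv f x)
      + 1 / (2 * (rho f x)\<^sup>2) * (gradsq f x + (norm (mcv f x))\<^sup>2) * gs f x $ i $ j
      - (1 / rho f x) * hess f x i j"

definition psi :: "(real^'n::finite \<Rightarrow> real^'m::finite) \<Rightarrow> real^'n \<Rightarrow> real^'n \<Rightarrow> real^'n \<Rightarrow> real" where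
  "psi f x a b = (\<Sum>i\<in>UNIV. \<Sum>j\<in>UNIV. a $ i * b $ j * psi_coef f x i j)"

definition principal_normals_on ::
  "(real^'n::finite) set \<Rightarrow> (real^'n \<Rightarrow> real^'m::finite) \<Rightarrow> nat \<Rightarrow> (nat \<Rightarrow> real^'n \<Rightarrow> real^'m)
     \<Rightarrow> (nat \<Rightarrow> real^'n \<Rightarrow> (real^'n) set) \<Rightarrow> bool" where
  "principal_normals_on S f k eta E \<longleftrightarrow>
     (\<forall>i\<in>{1..k}. C_inf_on S (eta i)) \<and>
     (\<forall>x\<in>S.
        (\<forall>i\<in>{1..k}. subspace (E i x) \<and> E i x \<noteq> {0}) \<and>
        (\<forall>i\<in>{1..k}. \<forall>j\<in>{1..k}. i \<noteq> j \<longrightarrow>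
            eta i x \<noteq> eta j x \<and> (\<forall>a\<in>E i x. \<forall>b\<in>E j x. gmet f x a b = 0)) \<and>
        span (\<Union>i\<in>{1..k}. E i x) = UNIV \<and>
        (\<forall>i\<in>{1..k}. \<forall>a\<in>E i x. \<forall>b. alpha f x a b = gmet f x a b *\<^sub>R eta i x))"

definition mpn :: "(real^'n::finite \<Rightarrow> real^'m::finite) \<Rightarrow> (nat \<Rightarrow> real^'n \<Rightarrow> real^'m) \<Rightarrow> nat \<Rightarrow> real^'n \<Rightarrow> real^'m" where
  "mpn f eta i x = (1 / rho f x) *\<^sub>R (eta i x - mcv f x)"

definition blaschke_eigenvalues_on ::
  "(real^'n::finite) set \<Rightarrow> (real^'n \<Rightarrow> real^'m::finite) \<Rightarrow> nat
     \<Rightarrow> (nat \<Rightarrow> real^'n \<Rightarrow> (real^'n) set) \<Rightarrow> (nat \<Rightarrow> real^'n \<Rightarrow> real) \<Rightarrow> bool" where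
  "blaschke_eigenvalues_on S f k E theta \<longleftrightarrow>
     (\<forall>x\<in>S. \<forall>i\<in>{1..k}. \<forall>a\<in>E i x. \<forall>b\<in>E i x. psi f x a b = theta i x * gsmet f x a b)"

end

theory Submission imports Defs begin

text \<open>Write \<open>\<eta>\<^sub>i\<close> for the Moebius principal normals. The orthogonality is pure algebra: expanding
  \<open>\<langle>\<eta>\<^sub>i - \<eta>\<^sub>k, \<eta>\<^sub>j - \<eta>\<^sub>k\<rangle>\<close> and inserting the three relations
  \<open>\<langle>\<eta>\<^sub>a, \<eta>\<^sub>b\<rangle> = -\<theta>\<^sub>a - \<theta>\<^sub>b\<close> together with
  \<open>\<parallel>\<eta>\<^sub>k\<parallel>\<^sup>2 = -2\<theta>\<^sub>k\<close> makes every \<open>\<theta>\<close> cancel.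
  The differences \<open>\<eta>\<^sub>i - \<eta>\<^sub>k\<close>, \<open>i < k\<close>, are nonzero because the principal normals are
  distinct, and they are normal vectors since the principal normals and the mean curvature vector
  are; so they form an orthogonal family of \<open>k - 1\<close> nonzero vectors in the \<open>p\<close>-dimensional
  normal space.\<close>

lemma matrix_inv_right: "invertible A \<Longrightarrow> A ** matrix_inv A = mat 1"
  and matrix_inv_left: "invertible A \<Longrightarrow> matrix_inv A ** A = mat 1"
  unfolding invertible_def matrix_inv_def by (metis (mono_tags, lifting) someI_ex)+

lemma inner_diff_diff_eq_0:
  fixes u v w :: "'a::real_inner"
  assumes "u \<bullet> v + s + t = 0" and "u \<bullet> w + s + r = 0" and "v \<bullet> w + t + r = 0"
    and "w \<bullet> w + 2 * r = 0"
  shows "(u - w) \<bullet> (v - w) = 0"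
  using assms by (simp add: inner_diff_left inner_diff_right inner_commute)

lemma card_orthogonal_to_subspace_le:
  fixes S T :: "'a::euclidean_space set"
  assumes "subspace T" and "pairwise orthogonal S" and "0 \<notin> S"
    and "\<And>s t. s \<in> S \<Longrightarrow> t \<in> T \<Longrightarrow> orthogonal t s"
  shows "card S + dim T \<le> DIM('a)"
proof -
  let ?N = "{y \<in> UNIV. \<forall>t \<in> T. orthogonal t y}"
  have "card S \<le> dim ?N"
    using assms by (intro independent_card_le_dim pairwise_orthogonal_independent) auto
  moreover have "dim ?N + dim T = DIM('a)"
    using dim_subspace_orthogonal_to_vectors[OF assms(1) subspace_UNIV] by simp
  ultimately show ?thesis by simp
qed

lemma gmat_symmetric: "gmat f x $ i $ j = gmat f x $ j $ i"
  by (simp add: gmat_def inner_commute)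

lemma tvec_inner_frame: "tvec f x a \<bullet> frame f x l = (gmat f x *v a) $ l"
  unfolding tvec_def matrix_vector_mult_def gmat_def
  by (simp add: inner_sum_left, rule sum.cong, simp_all add: inner_commute)

lemma inner_tvec_eq_0: "(\<And>l. v \<bullet> frame f x l = 0) \<Longrightarrow> tvec f x a \<bullet> v = 0"
  by (simp add: tvec_def inner_sum_left inner_sum_right inner_commute)

lemma nproj_orthogonal_frame:
  assumes "invertible (gmat f x)"
  shows "nproj f x v \<bullet> frame f x l = 0"
proof -
  define w where "w = (\<chi> j. v \<bullet> frame f x j)"
  have "nproj f x v \<bullet> frame f x l = w $ l - (\<Sum>i\<in>UNIV. (ginv f x *v w) $ i * gmat f x $ i $ l)"
    by (simp add: nproj_def w_def inner_diff_left inner_sum_left gmat_def matrix_vector_mult_def)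
  also have "(\<Sum>i\<in>UNIV. (ginv f x *v w) $ i * gmat f x $ i $ l) = (gmat f x *v (ginv f x *v w)) $ l"
    by (simp add: matrix_vector_mult_def gmat_symmetric[of f x l] mult.commute)
  also have "\<dots> = w $ l"
    using matrix_inv_right[OF assms] by (simp add: ginv_def matrix_vector_mul_assoc)
  finally show ?thesis by simp
qed

lemma alpha_orthogonal_frame: "invertible (gmat f x) \<Longrightarrow> alpha f x a b \<bullet> frame f x l = 0"
  by (simp add: alpha_def sff_def inner_sum_left nproj_orthogonal_frame)

lemma mcv_orthogonal_frame: "invertible (gmat f x) \<Longrightarrow> mcv f x \<bullet> frame f x l = 0"
  by (simp add: mcv_def sff_def inner_sum_left nproj_orthogonal_frame)

lemma linear_tvec: "linear (tvec f x)"
  by (rule linearI) (simp_all add: tvec_def algebra_simps sum.distrib scaleR_sum_right)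

lemma inj_tvec:
  assumes "invertible (gmat f x)"
  shows "inj (tvec f x)"
proof -
  have "a = 0" if "tvec f x a = 0" for a
  proof -
    have "(gmat f x *v a) $ l = 0" for l
      using that tvec_inner_frame[of f x a l] by simp
    then have "gmat f x *v a = 0" by (simp add: vec_eq_iff)
    then have "ginv f x *v (gmat f x *v a) = 0" by simp
    then show ?thesis
      using matrix_inv_left[OF assms] by (simp add: ginv_def matrix_vector_mul_assoc)
  qed
  then show ?thesis by (simp add: linear_inj_iff_eq_0[OF linear_tvec])
qed

lemma dim_range_tvec:
  fixes f :: "real^'n::finite \<Rightarrow> real^'m::finite"
  assumes "invertible (gmat f x)"
  shows "dim (range (tvec f x)) = CARD('n)"
  using dim_image_eq[OF linear_tvec, of f x UNIV] inj_tvec[OF assms] by simp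

lemma principal_normal_orthogonal_frame:
  assumes "invertible (gmat f x)" and "a \<noteq> 0"
    and "alpha f x a a = gmet f x a a *\<^sub>R e"
  shows "e \<bullet> frame f x l = 0"
proof -
  have "tvec f x a \<noteq> 0"
    using assms(2) inj_tvec[OF assms(1)] linear_0[OF linear_tvec] by (metis injD)
  then have "gmet f x a a > 0" by (simp add: gmet_def)
  moreover have "gmet f x a a * (e \<bullet> frame f x l) = 0"
    using alpha_orthogonal_frame[OF assms(1), of a a l] assms(3) by simp
  ultimately show ?thesis by simp
qed

lemma card_principal_normals_le:
  fixes f :: "real^'n::finite \<Rightarrow> real^'m::finite"
  assumes "CARD('m) = CARD('n) + p"
    and "invertible (gmat f x)" and "rho f x > 0"
    and nontrivial: "\<And>i. i \<in> {1..k} \<Longrightarrow> \<exists>a. a \<noteq> 0 \<and> alpha f x a a = gmet f x a a *\<^sub>R eta i x"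
    and distinct: "\<And>i j. i \<in> {1..k} \<Longrightarrow> j \<in> {1..k} \<Longrightarrow> i \<noteq> j \<Longrightarrow> eta i x \<noteq> eta j x"
    and orth: "\<And>i j. i \<in> {1..k-1} \<Longrightarrow> j \<in> {1..k-1} \<Longrightarrow> i \<noteq> j \<Longrightarrow>
                 (mpn f eta i x - mpn f eta k x) \<bullet> (mpn f eta j x - mpn f eta k x) = 0"
  shows "k \<le> p + 1"
proof (cases "k = 0")
  case False
  define d where "d i = mpn f eta i x - mpn f eta k x" for i
  have eta_normal: "eta i x \<bullet> frame f x l = 0" if "i \<in> {1..k}" for i l
    using nontrivial[OF that] principal_normal_orthogonal_frame[OF assms(2)] by blast
  have d_normal: "tvec f x a \<bullet> d i = 0" if "i \<in> {1..k-1}" for i a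
  proof (rule inner_tvec_eq_0)
    fix l
    have "eta i x \<bullet> frame f x l = 0" "eta k x \<bullet> frame f x l = 0"
      using that False by (auto intro: eta_normal)
    then show "d i \<bullet> frame f x l = 0"
      using mcv_orthogonal_frame[OF assms(2)] by (simp add: d_def mpn_def inner_diff_left)
  qed
  have d_nonzero: "d i \<noteq> 0" if "i \<in> {1..k-1}" for i
  proof
    assume "d i = 0"
    then have "(1 / rho f x) *\<^sub>R (eta i x - eta k x) = 0"
      by (simp add: d_def mpn_def algebra_simps)
    then show False using that False assms(3) distinct[of i k] by fastforce
  qed
  have "inj_on d {1..k-1}"
    using orth d_nonzero unfolding d_def inj_on_def by (metis inner_eq_zero_iff)
  then have "card (d ` {1..k-1}) = k - 1" by (simp add: card_image)
  moreover have "card (d ` {1..k-1}) + dim (range (tvec f x)) \<le> DIM(real^'m)"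
  proof (rule card_orthogonal_to_subspace_le)
    show "subspace (range (tvec f x))"
      by (rule linear_subspace_image[OF linear_tvec subspace_UNIV])
    show "pairwise orthogonal (d ` {1..k-1})"
      using orth unfolding pairwise_def orthogonal_def d_def by blast
  qed (use d_nonzero d_normal in \<open>auto simp: orthogonal_def\<close>)
  ultimately show ?thesis using dim_range_tvec[OF assms(2)] assms(1) by simp
qed simp

theorem lemma5p4:
  fixes f :: "real^'n::finite \<Rightarrow> real^'m::finite"
    and M U :: "(real^'n) set"
    and p k :: nat
    and eta :: "nat \<Rightarrow> real^'n \<Rightarrow> real^'m"
    and E :: "nat \<Rightarrow> real^'n \<Rightarrow> (real^'n) set"
    and theta :: "nat \<Rightarrow> real^'n \<Rightarrow> real"
  assumes "CARD('n) \<ge> 3"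
    and "CARD('m) = CARD('n) + p"
    and "open M"
    and "isometric_immersion_on M f"
    and "umbilic_free_on M f"
    and "flat_normal_bundle_on M f"
    and "semi_parallel_on M f"
    and "principal_normals_on M f k eta E"
    and "blaschke_eigenvalues_on M f k E theta"
    and standing: "\<forall>x\<in>M. \<forall>i\<in>{1..k}. \<forall>j\<in>{1..k}. i \<noteq> j \<longrightarrow>
                     mpn f eta i x \<bullet> mpn f eta j x + theta i x + theta j x = 0"
    and "open U" and "U \<subseteq> M" and "U \<noteq> {}"
    and "\<forall>x\<in>U. (norm (mpn f eta k x))\<^sup>2 + 2 * theta k x = 0"
  shows "(\<forall>x\<in>U. \<forall>i\<in>{1..k-1}. \<forall>j\<in>{1..k-1}. i \<noteq> j \<longrightarrow>
            (mpn f eta i x - mpn f eta k x) \<bullet> (mpn f eta j x - mpn f eta k x) = 0)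
         \<and> k \<le> p + 1"
proof -
  have orth: "\<forall>x\<in>U. \<forall>i\<in>{1..k-1}. \<forall>j\<in>{1..k-1}. i \<noteq> j \<longrightarrow>
            (mpn f eta i x - mpn f eta k x) \<bullet> (mpn f eta j x - mpn f eta k x) = 0"
  proof (intro ballI impI)
    fix x i j assume "x \<in> U" "i \<in> {1..k-1}" "j \<in> {1..k-1}" "i \<noteq> j"
    with \<open>U \<subseteq> M\<close> standing assms(14) show
      "(mpn f eta i x - mpn f eta k x) \<bullet> (mpn f eta j x - mpn f eta k x) = 0"
      by (intro inner_diff_diff_eq_0[where s = "theta i x" and t = "theta j x" and r = "theta k x"])
        (auto simp: power2_norm_eq_inner)
  qed
  obtain x where "x \<in> U" using \<open>U \<noteq> {}\<close> by blast
  with \<open>U \<subseteq> M\<close> have "x \<in> M" by blast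
  have "k \<le> p + 1"
  proof (rule card_principal_normals_le[where f = f and x = x])
    show "invertible (gmat f x)" "rho f x > 0"
      using assms(4,5) \<open>x \<in> M\<close> by (auto simp: isometric_immersion_on_def umbilic_free_on_def)
    show "\<exists>a. a \<noteq> 0 \<and> alpha f x a a = gmet f x a a *\<^sub>R eta i x" if "i \<in> {1..k}" for i
    proof -
      have "subspace (E i x)" "E i x \<noteq> {0}"
        "\<forall>a\<in>E i x. \<forall>b. alpha f x a b = gmet f x a b *\<^sub>R eta i x"
        using assms(8) \<open>x \<in> M\<close> that unfolding principal_normals_on_def by blast+
      then show ?thesis using subspace_0 by blast
    qed
  qed (use assms(2,8) orth \<open>x \<in> U\<close> \<open>x \<in> M\<close> in \<open>auto simp: principal_normals_on_def\<close>)
  with orth show ?thesis by blast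
qed

end
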